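(* Let $G$ be a graph and $k=k(G)>0$ such that every unit-weighted graph $H$ satisfies $$\mathsf{inter}^*_G(H)=\mathsf{inter}_G(H)\ge|E(H)|-k|V(H)|-k^2.$$ Then every unit-weighted graph $H$ satisfies $$\mathsf{inter}_G(H)\ge\frac1{27}\frac{|E(H)|^3}{k^2|V(H)|^2}-k|V(H)|,$$ so that $\mathsf{inter}_G$ is a $(27k^2,k)$-congestion measure.
   Context: Let $G=(V,E)$; $\mathcal P_{uv}$ is the set of paths in $G$ between $u,v$. A flow is $F:\bigcup\mathcal P_{uv}\to[0,\infty)$ with $F[u,v]=\sum_{p\in\mathcal P_{uv}}F(p)$; it is integral if for each $u,v$ it is supported on at most one path of $\mathcal P_{uv}$. $\mathsf{inter}(F)=\sum_{(u,v,u',v'):|\{u,v,u',v'\}|=4}\sum_{p\in\mathcal P_{uv},p'\in\mathcal P_{u'v'}}\sum_{x\in p\cap p'}F(p)F(p')$. For a graph $H$ with edge weights $w$, an $H$-flow in $G$ is a flow $F$ with an injective $\phi:V(H)\to V$ such that $F[\phi(u),\phi(v)]\ge w(u,v)$ for every edge $\{u,v\}\in E(H)$; unit-weighted means all weights are $1$. $\mathsf{inter}_G(H)$ (resp. $\mathsf{inter}^*_G(H)$) is the minimum of $\mathsf{inter}(F)$ over $H$-flows (resp. integral $H$-flows) $F$ in $G$. $\mathsf{inter}_G$ is a $(c,a)$-congestion measure if every unit-weighted graph $H=(V_H,E_H)$ satisfies $\mathsf{inter}_G(H)\ge\frac{|E_H|^3}{c|V_H|^2}-a|V_H|$. *)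

theory Defs
  imports Complex_Main "HOL-Library.Extended_Real"
begin

definition simple_graph :: "'a set \<Rightarrow> 'a set set \<Rightarrow> bool" where
  "simple_graph V E \<longleftrightarrow> finite V \<and>
     (\<forall>e\<in>E. \<exists>u v. u \<noteq> v \<and> u \<in> V \<and> v \<in> V \<and> e = {u, v})"

definition is_walk_path :: "'a set \<Rightarrow> 'a set set \<Rightarrow> 'a list \<Rightarrow> bool" where
  "is_walk_path V E p \<longleftrightarrow> p \<noteq> [] \<and> distinct p \<and> set p \<subseteq> V \<and>
     (\<forall>i. Suc i < length p \<longrightarrow> {p ! i, p ! Suc i} \<in> E)"

text \<open>An (undirected) path is identified with the pair {sequence, reversed sequence}.
  P_uv is the set of paths in G between u and v; note P_uv = P_vu.\<close>
definition paths :: "'a set \<Rightarrow> 'a set set \<Rightarrow> 'a \<Rightarrow> 'a \<Rightarrow> 'a list set set" where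
  "paths V E u v = {{p, rev p} | p. is_walk_path V E p \<and> hd p = u \<and> last p = v}"

definition all_paths :: "'a set \<Rightarrow> 'a set set \<Rightarrow> 'a list set set" where
  "all_paths V E = (\<Union>u. \<Union>v. paths V E u v)"

definition path_verts :: "'a list set \<Rightarrow> 'a set" where
  "path_verts P = (\<Union>p\<in>P. set p)"

text \<open>A flow: nonnegative weights on paths (values off paths are irrelevant).\<close>
definition is_flow :: "'a set \<Rightarrow> 'a set set \<Rightarrow> ('a list set \<Rightarrow> real) \<Rightarrow> bool" where
  "is_flow V E F \<longleftrightarrow> (\<forall>P\<in>all_paths V E. F P \<ge> 0)"

definition flow_between :: "'a set \<Rightarrow> 'a set set \<Rightarrow> ('a list set \<Rightarrow> real) \<Rightarrow> 'a \<Rightarrow> 'a \<Rightarrow> real" where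
  "flow_between V E F u v = (\<Sum>P\<in>paths V E u v. F P)"

definition integral_flow :: "'a set \<Rightarrow> 'a set set \<Rightarrow> ('a list set \<Rightarrow> real) \<Rightarrow> bool" where
  "integral_flow V E F \<longleftrightarrow> is_flow V E F \<and>
     (\<forall>u v. \<forall>P\<in>paths V E u v. \<forall>Q\<in>paths V E u v. F P \<noteq> 0 \<longrightarrow> F Q \<noteq> 0 \<longrightarrow> P = Q)"

definition inter :: "'a set \<Rightarrow> 'a set set \<Rightarrow> ('a list set \<Rightarrow> real) \<Rightarrow> real" where
  "inter V E F =
     (\<Sum>(u, v, u', v') \<in> {(u, v, u', v'). u \<in> V \<and> v \<in> V \<and> u' \<in> V \<and> v' \<in> V \<and> card {u, v, u', v'} = 4}.
        \<Sum>P\<in>paths V E u v. \<Sum>P'\<in>paths V E u' v'.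
          \<Sum>x\<in>path_verts P \<inter> path_verts P'. F P * F P')"

definition is_H_flow :: "'a set \<Rightarrow> 'a set set \<Rightarrow> 'b set \<Rightarrow> 'b set set \<Rightarrow> ('a list set \<Rightarrow> real) \<Rightarrow> bool" where
  "is_H_flow V E VH EH F \<longleftrightarrow> is_flow V E F \<and>
     (\<exists>\<phi>. inj_on \<phi> VH \<and> \<phi> ` VH \<subseteq> V \<and>
        (\<forall>a b. {a, b} \<in> EH \<longrightarrow> flow_between V E F (\<phi> a) (\<phi> b) \<ge> 1))"

text \<open>Minimum over H-flows; as an extended real, so that the empty minimum is +\<infinity>.\<close>
definition inter_G :: "'a set \<Rightarrow> 'a set set \<Rightarrow> 'b set \<Rightarrow> 'b set set \<Rightarrow> ereal" where
  "inter_G V E VH EH = (INF F\<in>{F. is_H_flow V E VH EH F}. ereal (inter V E F))"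

definition inter_star_G :: "'a set \<Rightarrow> 'a set set \<Rightarrow> 'b set \<Rightarrow> 'b set set \<Rightarrow> ereal" where
  "inter_star_G V E VH EH =
     (INF F\<in>{F. is_H_flow V E VH EH F \<and> integral_flow V E F}. ereal (inter V E F))"

definition congestion_measure :: "'a set \<Rightarrow> 'a set set \<Rightarrow> real \<Rightarrow> real \<Rightarrow> bool" where
  "congestion_measure V E c a \<longleftrightarrow>
     (\<forall>(VH :: nat set) EH. simple_graph VH EH \<longrightarrow>
        inter_G V E VH EH \<ge> ereal (real (card EH) ^ 3 / (c * real (card VH) ^ 2) - a * real (card VH)))"

end

theory Submission
  imports Defs
begin

text \<open>Sample every vertex of \<open>H\<close> independently with probability \<open>p\<close> and restrict an
  \<open>H\<close>-flow \<open>F\<close> to the paths between sampled vertices. In expectation the induced subgraph has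
  \<open>p\<^sup>2|E(H)|\<close> edges and \<open>p|V(H)|\<close> vertices, while every counted quadruple survives with
  probability \<open>p\<^sup>4\<close>, so the hypothesis gives
  \<open>p\<^sup>2|E(H)| - kp|V(H)| - k\<^sup>2 \<le> p\<^sup>4 inter(F)\<close>. Choosing \<open>p = 3k|V(H)|/|E(H)|\<close> yields the
  cubic bound; for \<open>|E(H)| < 3k|V(H)|\<close> the bound is nonpositive and holds trivially.\<close>

definition sample_weight :: "real \<Rightarrow> 'a set \<Rightarrow> 'a set \<Rightarrow> real" where
  "sample_weight p A S = p ^ card S * (1 - p) ^ card (A - S)"

lemma sample_weight_nonneg: "0 \<le> p \<Longrightarrow> p \<le> 1 \<Longrightarrow> 0 \<le> sample_weight p A S"
  by (simp add: sample_weight_def)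

lemma sum_sample_weight_superset:
  assumes "finite A" "T \<subseteq> A"
  shows "(\<Sum>S\<in>Pow A. sample_weight p A S * of_bool (T \<subseteq> S)) = p ^ card T"
proof -
  define g where "g i = (if i \<in> T then 0 else 1 - p)" for i
  have "(\<Prod>i\<in>A. p + g i) = (\<Sum>S\<in>Pow A. (\<Prod>i\<in>S. p) * (\<Prod>i\<in>A - S. g i))"
    by (rule prod_add) (rule assms(1))
  also have "\<dots> = (\<Sum>S\<in>Pow A. sample_weight p A S * of_bool (T \<subseteq> S))"
  proof (rule sum.cong[OF refl])
    fix S assume "S \<in> Pow A"
    show "(\<Prod>i\<in>S. p) * (\<Prod>i\<in>A - S. g i) = sample_weight p A S * of_bool (T \<subseteq> S)"
    proof (cases "T \<subseteq> S")
      case True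
      then have "(\<Prod>i\<in>A - S. g i) = (\<Prod>i\<in>A - S. 1 - p)"
        by (intro prod.cong) (auto simp: g_def)
      with True show ?thesis by (simp add: sample_weight_def)
    next
      case False
      then obtain i where "i \<in> T" "i \<notin> S" by blast
      then have "i \<in> A - S" "g i = 0" using assms(2) by (auto simp: g_def)
      then have "(\<Prod>i\<in>A - S. g i) = 0" using assms(1) by (meson finite_Diff prod_zero_iff)
      with False show ?thesis by simp
    qed
  qed
  finally have "(\<Sum>S\<in>Pow A. sample_weight p A S * of_bool (T \<subseteq> S)) = (\<Prod>i\<in>A. p + g i)" ..
  also have "\<dots> = (\<Prod>i\<in>A. if i \<in> T then p else 1)"
    by (intro prod.cong) (auto simp: g_def)
  also have "\<dots> = p ^ card T"
    using prod.inter_restrict[OF assms(1), of "\<lambda>_. p" T] assms(2) by (simp add: Int_absorb1)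
  finally show ?thesis .
qed

lemma sum_sample_weight: "finite A \<Longrightarrow> (\<Sum>S\<in>Pow A. sample_weight p A S) = 1"
  using sum_sample_weight_superset[of A "{}" p] by simp

lemma sum_sample_weight_image_superset:
  assumes "finite A" "inj_on \<phi> A" "0 \<le> p" "p \<le> 1"
  shows "(\<Sum>S\<in>Pow A. sample_weight p A S * of_bool (D \<subseteq> \<phi> ` S)) \<le> p ^ card D"
proof (cases "D \<subseteq> \<phi> ` A")
  case True
  define T where "T = {a \<in> A. \<phi> a \<in> D}"
  have "T \<subseteq> A" by (auto simp: T_def)
  have "D \<subseteq> \<phi> ` S \<longleftrightarrow> T \<subseteq> S" if "S \<subseteq> A" for S
    using True that assms(2) unfolding T_def inj_on_def by blast
  then have "(\<Sum>S\<in>Pow A. sample_weight p A S * of_bool (D \<subseteq> \<phi> ` S)) =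
      (\<Sum>S\<in>Pow A. sample_weight p A S * of_bool (T \<subseteq> S))"
    by (intro sum.cong) auto
  also have "\<dots> = p ^ card T"
    using sum_sample_weight_superset[OF assms(1) \<open>T \<subseteq> A\<close>] .
  also have "card T = card D"
  proof -
    have "\<phi> ` T = D" using True by (auto simp: T_def)
    with \<open>T \<subseteq> A\<close> assms(2) show ?thesis by (metis card_image inj_on_subset)
  qed
  finally show ?thesis by simp
next
  case False
  then have "(\<Sum>S\<in>Pow A. sample_weight p A S * of_bool (D \<subseteq> \<phi> ` S)) = 0"
    by (intro sum.neutral) fastforce
  with assms(3) show ?thesis by simp
qed

lemma sum_sample_weight_count:
  assumes "finite A" "finite C" "\<And>e. e \<in> C \<Longrightarrow> e \<subseteq> A \<and> card e = r"
  shows "(\<Sum>S\<in>Pow A. sample_weight p A S * card {e \<in> C. e \<subseteq> S}) = p ^ r * card C"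
proof -
  have "(\<Sum>S\<in>Pow A. sample_weight p A S * card {e \<in> C. e \<subseteq> S}) =
      (\<Sum>S\<in>Pow A. \<Sum>e\<in>C. sample_weight p A S * of_bool (e \<subseteq> S))"
    using assms(2) by (simp add: sum_distrib_left Collect_conj_eq Int_commute mult.commute)
  also have "\<dots> = (\<Sum>e\<in>C. \<Sum>S\<in>Pow A. sample_weight p A S * of_bool (e \<subseteq> S))"
    by (rule sum.swap)
  also have "\<dots> = (\<Sum>e\<in>C. p ^ r)"
    using assms(3) by (intro sum.cong refl) (metis sum_sample_weight_superset[OF assms(1)])
  finally show ?thesis by simp
qed

lemma sum_sample_weight_card:
  assumes "finite A"
  shows "(\<Sum>S\<in>Pow A. sample_weight p A S * card S) = p * card A"
proof -
  have "card {e \<in> (\<lambda>a. {a}) ` A. e \<subseteq> S} = card S" if "S \<subseteq> A" for S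
  proof -
    have "{e \<in> (\<lambda>a. {a}) ` A. e \<subseteq> S} = (\<lambda>a. {a}) ` S" using that by auto
    then show ?thesis by (simp add: card_image)
  qed
  then have "(\<Sum>S\<in>Pow A. sample_weight p A S * card S) =
      (\<Sum>S\<in>Pow A. sample_weight p A S * card {e \<in> (\<lambda>a. {a}) ` A. e \<subseteq> S})"
    by (intro sum.cong) auto
  also have "\<dots> = p ^ 1 * card ((\<lambda>a. {a}) ` A)"
    by (rule sum_sample_weight_count) (use assms in auto)
  also have "\<dots> = p * card A"
    by (simp add: card_image)
  finally show ?thesis .
qed

definition restrict_flow :: "'a set \<Rightarrow> ('a list set \<Rightarrow> real) \<Rightarrow> 'a list set \<Rightarrow> real" where
  "restrict_flow A F P = (if \<forall>q\<in>P. hd q \<in> A \<and> last q \<in> A then F P else 0)"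

lemma restrict_flow_paths:
  assumes "P \<in> paths V E u v"
  shows "restrict_flow A F P = (if u \<in> A \<and> v \<in> A then F P else 0)"
proof -
  obtain p where "P = {p, rev p}" "p \<noteq> []" "hd p = u" "last p = v"
    using assms unfolding paths_def is_walk_path_def by blast
  then show ?thesis by (auto simp: restrict_flow_def hd_rev last_rev)
qed

lemma is_flow_restrict_flow: "is_flow V E F \<Longrightarrow> is_flow V E (restrict_flow A F)"
  by (auto simp: is_flow_def restrict_flow_def)

lemma flow_between_restrict_flow:
  "u \<in> A \<Longrightarrow> v \<in> A \<Longrightarrow> flow_between V E (restrict_flow A F) u v = flow_between V E F u v"
  unfolding flow_between_def by (intro sum.cong) (auto simp: restrict_flow_paths)

lemma flow_nonneg: "is_flow V E F \<Longrightarrow> P \<in> paths V E u v \<Longrightarrow> 0 \<le> F P"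
  unfolding is_flow_def all_paths_def by blast

definition distinct_quads :: "'a set \<Rightarrow> ('a \<times> 'a \<times> 'a \<times> 'a) set" where
  "distinct_quads V =
     {(u, v, u', v'). u \<in> V \<and> v \<in> V \<and> u' \<in> V \<and> v' \<in> V \<and> card {u, v, u', v'} = 4}"

definition inter_at :: "'a set \<Rightarrow> 'a set set \<Rightarrow> ('a list set \<Rightarrow> real) \<Rightarrow> 'a \<Rightarrow> 'a \<Rightarrow> 'a \<Rightarrow> 'a \<Rightarrow> real"
  where "inter_at V E F u v u' v' =
     (\<Sum>P\<in>paths V E u v. \<Sum>P'\<in>paths V E u' v'. \<Sum>x\<in>path_verts P \<inter> path_verts P'. F P * F P')"

lemma inter_eq_sum_inter_at:
  "inter V E F = (\<Sum>(u, v, u', v')\<in>distinct_quads V. inter_at V E F u v u' v')"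
  unfolding inter_def distinct_quads_def inter_at_def ..

lemma inter_at_nonneg:
  assumes "is_flow V E F"
  shows "0 \<le> inter_at V E F u v u' v'"
  unfolding inter_at_def
  by (intro sum_nonneg mult_nonneg_nonneg; blast intro: flow_nonneg[OF assms])

lemma inter_nonneg: "is_flow V E F \<Longrightarrow> 0 \<le> inter V E F"
  unfolding inter_eq_sum_inter_at by (auto intro!: sum_nonneg inter_at_nonneg)

lemma inter_restrict_flow:
  "inter V E (restrict_flow A F) =
     (\<Sum>(u, v, u', v')\<in>distinct_quads V. of_bool ({u, v, u', v'} \<subseteq> A) * inter_at V E F u v u' v')"
  unfolding inter_eq_sum_inter_at inter_at_def
  by (intro sum.cong) (auto simp: restrict_flow_paths sum_distrib_left)

lemma sum_sample_weight_inter_restrict_flow: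
  assumes "finite VH" "inj_on \<phi> VH" "is_flow V E F" "0 \<le> p" "p \<le> 1"
  shows "(\<Sum>S\<in>Pow VH. sample_weight p VH S * inter V E (restrict_flow (\<phi> ` S) F))
      \<le> p ^ 4 * inter V E F"
proof -
  let ?w = "sample_weight p VH"
  have "(\<Sum>S\<in>Pow VH. ?w S * inter V E (restrict_flow (\<phi> ` S) F)) =
      (\<Sum>(u, v, u', v')\<in>distinct_quads V. inter_at V E F u v u' v' *
         (\<Sum>S\<in>Pow VH. ?w S * of_bool ({u, v, u', v'} \<subseteq> \<phi> ` S)))"
    by (simp add: inter_restrict_flow sum_distrib_left sum_distrib_right case_prod_unfold
        sum.swap[of _ "Pow VH"] mult_ac)
  also have "\<dots> \<le> (\<Sum>(u, v, u', v')\<in>distinct_quads V. inter_at V E F u v u' v' * p ^ 4)"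
  proof (intro sum_mono, clarify)
    fix u v u' v' assume "(u, v, u', v') \<in> distinct_quads V"
    then have "card {u, v, u', v'} = 4" by (simp add: distinct_quads_def)
    then show "inter_at V E F u v u' v' * (\<Sum>S\<in>Pow VH. ?w S * of_bool ({u, v, u', v'} \<subseteq> \<phi> ` S))
        \<le> inter_at V E F u v u' v' * p ^ 4"
      using sum_sample_weight_image_superset[OF assms(1,2,4,5), of "{u, v, u', v'}"]
      by (intro mult_left_mono inter_at_nonneg assms(3)) auto
  qed
  also have "\<dots> = p ^ 4 * inter V E F"
    by (simp add: inter_eq_sum_inter_at sum_distrib_left case_prod_unfold mult_ac)
  finally show ?thesis .
qed

lemma simple_graph_induced: "simple_graph V E \<Longrightarrow> S \<subseteq> V \<Longrightarrow> simple_graph S {e \<in> E. e \<subseteq> S}"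
  unfolding simple_graph_def by (metis (mono_tags, lifting) finite_subset insert_subset mem_Collect_eq)

lemma simple_graph_card_edges_le:
  assumes "simple_graph V E"
  shows "card E \<le> card V ^ 2"
proof -
  have "finite V" using assms by (simp add: simple_graph_def)
  moreover have "E \<subseteq> (\<lambda>(a, b). {a, b}) ` (V \<times> V)"
    using assms by (auto simp: simple_graph_def)
  ultimately have "card E \<le> card (V \<times> V)"
    by (meson card_image_le card_mono finite_SigmaI finite_imageI order_trans)
  then show ?thesis by (simp add: card_cartesian_product power2_eq_square)
qed

lemma is_H_flow_restrict_flow_induced:
  assumes "is_flow V E F" "inj_on \<phi> VH" "\<phi> ` VH \<subseteq> V"
    and "\<And>a b. {a, b} \<in> EH \<Longrightarrow> flow_between V E F (\<phi> a) (\<phi> b) \<ge> 1"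
    and "S \<subseteq> VH"
  shows "is_H_flow V E S {e \<in> EH. e \<subseteq> S} (restrict_flow (\<phi> ` S) F)"
  unfolding is_H_flow_def
proof (intro conjI exI allI impI)
  show "is_flow V E (restrict_flow (\<phi> ` S) F)" using assms(1) by (rule is_flow_restrict_flow)
  show "inj_on \<phi> S" "\<phi> ` S \<subseteq> V" using assms(2,3,5) by (auto intro: inj_on_subset)
  fix a b assume "{a, b} \<in> {e \<in> EH. e \<subseteq> S}"
  then show "1 \<le> flow_between V E (restrict_flow (\<phi> ` S) F) (\<phi> a) (\<phi> b)"
    using assms(4) by (simp add: flow_between_restrict_flow)
qed

lemma inter_G_le_inter: "is_H_flow V E VH EH F \<Longrightarrow> inter_G V E VH EH \<le> ereal (inter V E F)"
  unfolding inter_G_def by (rule INF_lower) simp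

lemma sampled_lower_bound:
  fixes VH :: "nat set" and k p :: real
  assumes lower: "\<forall>(VH :: nat set) EH. simple_graph VH EH \<longrightarrow>
           inter_G V E VH EH \<ge> ereal (real (card EH) - k * real (card VH) - k ^ 2)"
    and H: "simple_graph VH EH" and F: "is_H_flow V E VH EH F"
    and p: "0 \<le> p" "p \<le> 1"
  shows "p ^ 2 * card EH - k * p * card VH - k ^ 2 \<le> p ^ 4 * inter V E F"
proof -
  obtain \<phi> where flow: "is_flow V E F" and \<phi>: "inj_on \<phi> VH" "\<phi> ` VH \<subseteq> V"
    and edges: "\<And>a b. {a, b} \<in> EH \<Longrightarrow> flow_between V E F (\<phi> a) (\<phi> b) \<ge> 1"
    using F unfolding is_H_flow_def by blast
  have fin: "finite VH" using H by (simp add: simple_graph_def)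
  have finEH: "finite EH" using H fin by (auto simp: simple_graph_def intro: finite_subset[of _ "Pow VH"])
  have EH: "e \<subseteq> VH \<and> card e = 2" if "e \<in> EH" for e
    using H that by (auto simp: simple_graph_def)
  let ?w = "sample_weight p VH"
  let ?E = "\<lambda>S. {e \<in> EH. e \<subseteq> S}"
  have induced: "card (?E S) - k * card S - k ^ 2 \<le> inter V E (restrict_flow (\<phi> ` S) F)"
    if "S \<subseteq> VH" for S
  proof -
    have "ereal (card (?E S) - k * card S - k ^ 2) \<le> inter_G V E S (?E S)"
      using lower simple_graph_induced[OF H that] by blast
    also have "\<dots> \<le> ereal (inter V E (restrict_flow (\<phi> ` S) F))"
      by (intro inter_G_le_inter is_H_flow_restrict_flow_induced[OF flow \<phi>] edges that)
    finally show ?thesis by simp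
  qed
  have "p ^ 2 * card EH - k * p * card VH - k ^ 2 =
      (\<Sum>S\<in>Pow VH. ?w S * card (?E S)) - k * (\<Sum>S\<in>Pow VH. ?w S * card S) - k ^ 2 * (\<Sum>S\<in>Pow VH. ?w S)"
    using fin finEH EH by (simp add: sum_sample_weight_count sum_sample_weight_card sum_sample_weight)
  also have "\<dots> = (\<Sum>S\<in>Pow VH. ?w S * (card (?E S) - k * card S - k ^ 2))"
    by (simp add: right_diff_distrib sum_subtractf sum_distrib_left sum_distrib_right mult_ac)
  also have "\<dots> \<le> (\<Sum>S\<in>Pow VH. ?w S * inter V E (restrict_flow (\<phi> ` S) F))"
    using p by (intro sum_mono mult_left_mono induced sample_weight_nonneg) auto
  also have "\<dots> \<le> p ^ 4 * inter V E F"
    by (rule sum_sample_weight_inter_restrict_flow[OF fin \<phi>(1) flow p])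
  finally show ?thesis .
qed

lemma cubic_bound_from_sampling:
  fixes m n k I :: real
  assumes k: "k > 0" and m: "0 \<le> m" "m \<le> n ^ 2" and n: "0 \<le> n" and I: "0 \<le> I"
    and sample: "\<And>p. 0 \<le> p \<Longrightarrow> p \<le> 1 \<Longrightarrow> p ^ 2 * m - k * p * n - k ^ 2 \<le> p ^ 4 * I"
  shows "1 / 27 * (m ^ 3 / (k ^ 2 * n ^ 2)) - k * n \<le> I"
proof (cases "m \<le> 3 * k * n")
  case True
  show ?thesis
  proof (cases "n = 0")
    case True
    with m have "m = 0" by simp
    with True I show ?thesis by simp
  next
    case False
    have "m ^ 3 \<le> (3 * k * n) ^ 3" using True m by (intro power_mono) auto
    also have "\<dots> = 27 * k * n * (k ^ 2 * n ^ 2)" by (simp add: power2_eq_square power3_eq_cube)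
    finally have "m ^ 3 / (k ^ 2 * n ^ 2) \<le> 27 * k * n"
      using k False by (simp add: pos_divide_le_eq)
    with I show ?thesis by simp
  qed
next
  case False
  have "0 \<le> 3 * k * n" using k n by simp
  with False have "m > 0" by simp
  with m have "n \<noteq> 0" by auto
  define t where "t = k ^ 2 * n ^ 2 / m"
  define p where "p = 3 * k * n / m"
  have "t > 0" using k \<open>n \<noteq> 0\<close> \<open>m > 0\<close> by (simp add: t_def)
  have "k ^ 2 \<le> t" using m \<open>m > 0\<close> k by (simp add: t_def pos_le_divide_eq)
  have "0 \<le> p" "p \<le> 1" using False k n \<open>m > 0\<close> by (simp_all add: p_def)
  have p2: "p ^ 2 = 9 * t / m" and "k * p * n = 3 * t"
    using \<open>m > 0\<close> by (simp_all add: p_def t_def power2_eq_square)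
  have "5 * t \<le> p ^ 2 * m - k * p * n - k ^ 2"
    using \<open>k ^ 2 \<le> t\<close> \<open>m > 0\<close> by (simp add: p2 \<open>k * p * n = 3 * t\<close>)
  also have "\<dots> \<le> p ^ 4 * I" using sample \<open>0 \<le> p\<close> \<open>p \<le> 1\<close> .
  also have "\<dots> = (p ^ 2) ^ 2 * I" by (simp flip: power_mult)
  also have "\<dots> = t * (81 * t * I / m ^ 2)" unfolding p2 by (simp add: power_divide power2_eq_square)
  finally have "5 * m ^ 2 \<le> 81 * (t * I)"
    using \<open>t > 0\<close> \<open>m > 0\<close> by (simp add: pos_le_divide_eq)
  moreover have "0 \<le> t * I" using \<open>t > 0\<close> I by simp
  ultimately have "m ^ 2 \<le> 27 * (t * I)" by linarith
  then have "m ^ 2 / t \<le> 27 * I"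
    using \<open>t > 0\<close> by (simp add: pos_divide_le_eq mult_ac)
  moreover have "m ^ 3 / (k ^ 2 * n ^ 2) = m ^ 2 / t"
    using \<open>m > 0\<close> by (simp add: t_def power3_eq_cube power2_eq_square)
  moreover have "0 \<le> k * n" using k n by simp
  ultimately show ?thesis by linarith
qed

lemma inter_G_cubic_lower_bound:
  fixes VH :: "nat set" and k :: real
  assumes "k > 0"
    and lower: "\<forall>(VH :: nat set) EH. simple_graph VH EH \<longrightarrow>
           inter_G V E VH EH \<ge> ereal (real (card EH) - k * real (card VH) - k ^ 2)"
    and H: "simple_graph VH EH"
  shows "ereal (1 / 27 * (real (card EH) ^ 3 / (k ^ 2 * real (card VH) ^ 2)) - k * real (card VH))
      \<le> inter_G V E VH EH"
  unfolding inter_G_def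
proof (rule INF_greatest, clarify)
  fix F assume F: "is_H_flow V E VH EH F"
  have "real (card EH) \<le> real (card VH) ^ 2"
    using simple_graph_card_edges_le[OF H] by (metis of_nat_le_iff of_nat_power)
  moreover have "0 \<le> inter V E F"
    using F unfolding is_H_flow_def by (blast intro: inter_nonneg)
  ultimately have "1 / 27 * (real (card EH) ^ 3 / (k ^ 2 * real (card VH) ^ 2)) - k * real (card VH)
      \<le> inter V E F"
    using cubic_bound_from_sampling[OF assms(1) of_nat_0_le_iff _ of_nat_0_le_iff _
        sampled_lower_bound[OF lower H F]] by blast
  then show "ereal (1 / 27 * (real (card EH) ^ 3 / (k ^ 2 * real (card VH) ^ 2))
      - k * real (card VH)) \<le> ereal (inter V E F)"
    by simp
qed

theorem lemma3p5:
  fixes V :: "'a set" and E :: "'a set set" and k :: real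
  assumes "simple_graph V E"
    and "k > 0"
    and "\<forall>(VH :: nat set) EH. simple_graph VH EH \<longrightarrow>
           inter_star_G V E VH EH = inter_G V E VH EH \<and>
           inter_G V E VH EH \<ge> ereal (real (card EH) - k * real (card VH) - k ^ 2)"
  shows "(\<forall>(VH :: nat set) EH. simple_graph VH EH \<longrightarrow>
           inter_G V E VH EH \<ge>
             ereal (1 / 27 * (real (card EH) ^ 3 / (k ^ 2 * real (card VH) ^ 2)) - k * real (card VH)))
         \<and> congestion_measure V E (27 * k ^ 2) k"
proof -
  have lower: "\<forall>(VH :: nat set) EH. simple_graph VH EH \<longrightarrow>
           inter_G V E VH EH \<ge> ereal (real (card EH) - k * real (card VH) - k ^ 2)"
    using assms(3) by blast
  note cubic = inter_G_cubic_lower_bound[OF assms(2) lower]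
  have "congestion_measure V E (27 * k ^ 2) k"
    unfolding congestion_measure_def
  proof (intro allI impI)
    fix VH :: "nat set" and EH assume H: "simple_graph VH EH"
    have "real (card EH) ^ 3 / (27 * k ^ 2 * real (card VH) ^ 2) =
        1 / 27 * (real (card EH) ^ 3 / (k ^ 2 * real (card VH) ^ 2))"
      by simp
    then show "ereal (real (card EH) ^ 3 / (27 * k ^ 2 * real (card VH) ^ 2) - k * real (card VH))
        \<le> inter_G V E VH EH"
      using cubic[OF H] by (simp only:)
  qed
  with cubic show ?thesis by blast
qed

end
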